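(* Fix $q$, an integer $m_q$ and $\hat\omega\in\mathbb{R}$. Let $(f^n_{q_i})$ and $(f^{eq^n}_{q_i})$, indexed by grid index $i\in\mathbb{Z}$ and time level $n$, satisfy the general lattice Boltzmann equation $$f^{n+1}_{q_i}=(1-\hat\omega)f^n_{q_{i-m_q}}+\hat\omega f^{eq^n}_{q_{i-m_q}}$$ for all $i$ and all time levels, and define $f^{neq^n}_{q_i}:=f^n_{q_i}-f^{eq^n}_{q_i}$. Let $N\in\mathbb{N}$ and suppose $f^{neq^{n-N}}_{q_{i-(N+1)m_q}}=0$. Then the lattice Boltzmann equation is equivalent to $$f^{n+1}_{q_i}=\hat\omega\left(\sum_{k=0}^{N-1}(1-\hat\omega)^k f^{eq^{n-k}}_{q_{i-(k+1)m_q}}\right)+(1-\hat\omega)^N f^{eq^{n-N}}_{q_{i-(N+1)m_q}}.$$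
   Context: This is the one-dimensional lattice Boltzmann equation on a uniform grid $x_i$ with time levels $t_n$: $f^{n+1}_{q_i}:=f_q(x_i,t_n+\Delta t_n)$, $f^n_{q_{i-m_q}}:=f_q(x_i-v_{q,n}\Delta t_n,t_n)$ and $f^{eq^n}_{q_{i-m_q}}:=f^{eq}_q(U(x_i-v_{q,n}\Delta t_n,t_n))$, where the discrete velocity is $v_{q,n}=m_q\lambda_n$ with $m_q\in\mathbb{Z}$ and $\Delta t_n=\Delta x/\lambda_n$. Here $\hat\omega=\omega=\Delta t/\epsilon$ for the explicit discretisation and $\hat\omega=\omega/(1+\omega)$ for the semi-implicit one. *)

theory Defs
  imports Complex_Main
begin

text \<open>Distributions for a fixed velocity index q: f n i = f^n_{q_i}, time level n, grid index i.
  Non-equilibrium part f^{neq^n}_{q_i} := f^n_{q_i} - f^{eq^n}_{q_i}.\<close>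

definition fneq :: "(nat \<Rightarrow> int \<Rightarrow> real) \<Rightarrow> (nat \<Rightarrow> int \<Rightarrow> real) \<Rightarrow> nat \<Rightarrow> int \<Rightarrow> real" where
  "fneq f feq n i = f n i - feq n i"

end

theory Submission
  imports Defs
begin

text \<open>Unrolling the lattice Boltzmann recursion N times along the characteristic
  x - v t expresses f at level n + 1 as a geometrically weighted sum of the
  equilibria met along the way plus (1 - \<omega>)^N times f at level n + 1 - N.
  One further step from a point with vanishing non-equilibrium part produces
  exactly the equilibrium there, whatever \<omega> is, which closes the sum. Since the
  left-hand side of the equivalence is an instance of the assumed equation, the
  equivalence amounts to this closed formula.\<close>

lemma lbe_unroll:
  fixes f feq :: "nat \<Rightarrow> int \<Rightarrow> real" and m :: int and w :: real
  assumes LBE: "\<And>n i. f (Suc n) i = (1 - w) * f n (i - m) + w * feq n (i - m)"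
    and "N \<le> n"
  shows "f (Suc n) i = w * (\<Sum>k<N. (1 - w) ^ k * feq (n - k) (i - (int k + 1) * m))
           + (1 - w) ^ N * f (Suc (n - N)) (i - int N * m)"
  using \<open>N \<le> n\<close>
proof (induction N)
  case 0
  then show ?case by simp
next
  case (Suc N)
  have level: "n - N = Suc (n - Suc N)"
    using Suc.prems by simp
  have shift: "i - int N * m - m = i - (int N + 1) * m"
    by (simp add: algebra_simps)
  note step = LBE[of "n - N" "i - int N * m", unfolded shift level]
  have "f (Suc n) i = w * (\<Sum>k<N. (1 - w) ^ k * feq (n - k) (i - (int k + 1) * m))
           + (1 - w) ^ N * f (Suc (n - N)) (i - int N * m)"
    using Suc by simp
  also have "\<dots> = w * (\<Sum>k<Suc N. (1 - w) ^ k * feq (n - k) (i - (int k + 1) * m))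
           + (1 - w) ^ Suc N * f (Suc (n - Suc N)) (i - int (Suc N) * m)"
    unfolding level step sum.lessThan_Suc by (simp add: algebra_simps)
  finally show ?case .
qed

lemma lbe_step_from_equilibrium:
  fixes f feq :: "nat \<Rightarrow> int \<Rightarrow> real" and m :: int and w :: real
  assumes LBE: "\<And>n i. f (Suc n) i = (1 - w) * f n (i - m) + w * feq n (i - m)"
    and "fneq f feq n (i - m) = 0"
  shows "f (Suc n) i = feq n (i - m)"
proof -
  have "f n (i - m) = feq n (i - m)"
    using assms(2) by (simp add: fneq_def)
  then show ?thesis
    using LBE[of n i] by (simp add: algebra_simps)
qed

theorem mainTheorem2:
  fixes f feq :: "nat \<Rightarrow> int \<Rightarrow> real" and m :: int and w :: real
    and N n :: nat and i :: int
  assumes LBE: "\<forall>n i. f (Suc n) i = (1 - w) * f n (i - m) + w * feq n (i - m)"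
    and "N \<le> n"
    and "fneq f feq (n - N) (i - (int N + 1) * m) = 0"
  shows "(f (Suc n) i = (1 - w) * f n (i - m) + w * feq n (i - m)) \<longleftrightarrow>
         f (Suc n) i = w * (\<Sum>k<N. (1 - w) ^ k * feq (n - k) (i - (int k + 1) * m))
                        + (1 - w) ^ N * feq (n - N) (i - (int N + 1) * m)"
proof -
  have shift: "i - int N * m - m = i - (int N + 1) * m"
    by (simp add: algebra_simps)
  have "f (Suc (n - N)) (i - int N * m) = feq (n - N) (i - (int N + 1) * m)"
    using lbe_step_from_equilibrium[where f = f and feq = feq, OF LBE[rule_format] assms(3)[folded shift]]
    unfolding shift .
  then have "f (Suc n) i = w * (\<Sum>k<N. (1 - w) ^ k * feq (n - k) (i - (int k + 1) * m))
                        + (1 - w) ^ N * feq (n - N) (i - (int N + 1) * m)"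
    using lbe_unroll[where f = f and feq = feq, OF LBE[rule_format] \<open>N \<le> n\<close>, of i] by simp
  then show ?thesis
    using LBE by simp
qed

end
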